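(* Let $E$ be a finite-dimensional complex Hilbert space, $e\in E$ a unit vector, $\tau\in(0,1)$, and $T_0\in B(E)_+$. Define $$T_{n+1}:=T_n^{1/2}\bigl(I_E-\tau|e\rangle\langle e|\bigr)T_n^{1/2}\qquad(n\ge0),$$ and let $T_\infty:=\lim_n T_n$ (norm limit, which exists since $(T_n)$ is decreasing in the operator order). Let $Q:=I_E-|e\rangle\langle e|$ be the orthogonal projection onto $e^\perp$. With respect to $E=\mathbb{C}e\oplus e^\perp$ write $$T_n=\begin{pmatrix}a_n & b_n^*\\ b_n & B_n\end{pmatrix},$$ where $a_n:=\langle e,T_ne\rangle\ge0$, $b_n:=QT_ne\in e^\perp$, $B_n:=QT_nQ\in B(e^\perp)_+$, and set $y_n:=QT_n^{1/2}e\in e^\perp$. Then: (1) $a_{n+1}=(1-\tau)a_n+\tau\|y_n\|^2$ for every $n\ge0$. (2) $\tau\sum_{n=0}^\infty\|y_n\|^2=\mathrm{tr}(B_0-B_\infty)<\infty$, where $B_\infty:=QT_\infty Q$; in particular $y_n\to0$. (3) $a_n\to0$. (4) $b_n\to0$. Consequently, with respect to $E=\mathbb{C}e\oplus e^\perp$, $$T_\infty=\begin{pmatrix}0&0\\0&B_\infty\end{pmatrix},$$ equivalently $T_\infty e=0$ and $\mathrm{ran}(T_\infty)\subseteq e^\perp$.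
   Context: For vectors $x,y$, $|x\rangle\langle y|$ denotes the operator $z\mapsto\langle y,z\rangle x$. $B(E)_+$ denotes the positive operators on $E$; $T^{1/2}$ is the positive square root. *)

theory Defs
  imports "HOL-Analysis.Analysis"
begin

text \<open>The finite-dimensional complex Hilbert space E is modelled as complex^'n
  with the standard inner product (linear in the second argument);
  operators on E are matrices complex^'n^'n acting by *v.\<close>

definition cinner :: "complex^'n \<Rightarrow> complex^'n \<Rightarrow> complex" where
  "cinner x y = (\<Sum>i\<in>UNIV. cnj (x$i) * y$i)"

definition ketbra :: "complex^'n \<Rightarrow> complex^'n \<Rightarrow> complex^'n^'n" where
  "ketbra x y = (\<chi> i j. x$i * cnj (y$j))"

definition pos_op :: "complex^'n^'n \<Rightarrow> bool" where
  "pos_op A \<longleftrightarrow> (\<forall>x. Im (cinner x (A *v x)) = 0 \<and> Re (cinner x (A *v x)) \<ge> 0)"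

definition op_sqrt :: "complex^'n^'n \<Rightarrow> complex^'n^'n" where
  "op_sqrt A = (THE S. pos_op S \<and> S ** S = A)"

end

theory Submission
  imports Defs
begin

(* With S_k = T_k^(1/2) the recursion reads T_(k+1) = T_k - tau |S_k e><S_k e|, so (T_k) is a
   decreasing sequence of positive matrices and converges.  Compressing by Q gives
   B_k - B_(k+1) = tau |y_k><y_k|, so tau * sum |y_k|^2 telescopes to tr (B_0 - B_inf) and y_k -> 0.
   On the diagonal a_k = |S_k e|^2 = |<e, S_k e>|^2 + |y_k|^2 while a_(k+1) = a_k - tau |<e, S_k e>|^2,
   which is recursion (1); as 1 - tau < 1 and y_k -> 0 it forces a_k -> 0.  Then <e, T_inf e> = 0,
   and positivity of T_inf gives T_inf e = 0.
   The square root needs no spectral theorem: for 0 <= B <= 1 the iterates C_(n+1) = (B + C_n^2)/2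
   are polynomials in B with nonnegative coefficients and increase to 1 - (1 - B)^(1/2). *)

lemma cinner_add_left: "cinner (x + y) z = cinner x z + cinner y z"
  by (simp add: cinner_def sum.distrib algebra_simps)

lemma cinner_add_right: "cinner x (y + z) = cinner x y + cinner x z"
  by (simp add: cinner_def sum.distrib algebra_simps)

lemma cinner_diff_left: "cinner (x - y) z = cinner x z - cinner y z"
  by (simp add: cinner_def sum_subtractf algebra_simps)

lemma cinner_diff_right: "cinner x (y - z) = cinner x y - cinner x z"
  by (simp add: cinner_def sum_subtractf algebra_simps)

lemma cinner_zero_left [simp]: "cinner 0 x = 0"
  by (simp add: cinner_def)

lemma cinner_zero_right [simp]: "cinner x 0 = 0"
  by (simp add: cinner_def)

lemma cinner_scaleR_left: "cinner (r *\<^sub>R x) y = of_real r * cinner x y"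
  unfolding cinner_def by (simp add: sum_distrib_left) (simp add: scaleR_conv_of_real mult_ac)

lemma cinner_scaleR_right: "cinner x (r *\<^sub>R y) = of_real r * cinner x y"
  unfolding cinner_def by (simp add: sum_distrib_left) (simp add: scaleR_conv_of_real mult_ac)

lemma cinner_smult_left: "cinner (c *s x) y = cnj c * cinner x y"
  by (simp add: cinner_def sum_distrib_left algebra_simps)

lemma cinner_smult_right: "cinner x (c *s y) = c * cinner x y"
  by (simp add: cinner_def sum_distrib_left algebra_simps)

lemma cinner_commute: "cinner y x = cnj (cinner x y)"
  by (simp add: cinner_def mult.commute)

lemma cinner_self: "cinner x x = of_real ((norm x)\<^sup>2)"
proof -
  have "cinner x x = (\<Sum>i\<in>UNIV. of_real ((cmod (x$i))\<^sup>2))"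
    unfolding cinner_def by (intro sum.cong refl) (subst complex_norm_square, simp add: mult.commute)
  then show ?thesis
    by (simp add: norm_vec_def L2_set_def sum_nonneg)
qed

lemma Re_cinner_self: "Re (cinner x x) = (norm x)\<^sup>2"
  by (simp add: cinner_self)

lemma cinner_axis_left:
  fixes v :: "complex^'n"
  shows "cinner (axis i 1) v = v$i"
proof -
  have "(\<lambda>k. cnj ((axis i 1::complex^'n) $ k) * v $ k) = (\<lambda>k. if k = i then v$k else 0)"
    by (auto simp: axis_def)
  then show ?thesis
    unfolding cinner_def by (simp only:) simp
qed

lemma cinner_axis_matrix:
  fixes A :: "complex^'n^'n"
  shows "cinner (axis i 1) (A *v axis j 1) = A$i$j"
proof -
  have "(\<lambda>k. A$i$k * (axis j 1::complex^'n)$k) = (\<lambda>k. if k = j then A$i$k else 0)"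
    by (auto simp: axis_def)
  then show ?thesis
    unfolding cinner_axis_left matrix_vector_mult_def vec_lambda_beta by (simp only:) simp
qed

lemma matrix_vector_mult_scaleR_right:
  "(A::'a::real_algebra_1^'n^'m) *v (r *\<^sub>R x) = r *\<^sub>R (A *v x)"
  by (simp add: matrix_vector_mult_def vec_eq_iff scaleR_sum_right)

lemma matrix_vector_mult_scaleR_left:
  "(r *\<^sub>R A::'a::real_algebra_1^'n^'m) *v x = r *\<^sub>R (A *v x)"
  by (simp add: matrix_vector_mult_def vec_eq_iff scaleR_sum_right)

lemma matrix_add_rdistrib: "((A::'a::semiring_1^'n^'m) + B) ** C = A ** C + B ** C"
  by (simp add: matrix_matrix_mult_def vec_eq_iff sum.distrib[symmetric] algebra_simps)

lemma matrix_diff_rdistrib: "((A::'a::ring_1^'n^'m) - B) ** C = A ** C - B ** C"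
  by (simp add: matrix_matrix_mult_def vec_eq_iff sum_subtractf[symmetric] algebra_simps)

lemma matrix_diff_ldistrib: "(C::'a::ring_1^'n^'m) ** (A - B) = C ** A - C ** B"
  by (simp add: matrix_matrix_mult_def vec_eq_iff sum_subtractf[symmetric] algebra_simps)

lemma matrix_mul_scaleR_left: "((r *\<^sub>R A)::'a::real_algebra_1^'n^'m) ** B = r *\<^sub>R (A ** B)"
  by (simp add: scalar_matrix_assoc)

lemma matrix_mul_scaleR_right: "(A::'a::real_algebra_1^'n^'m) ** (r *\<^sub>R B) = r *\<^sub>R (A ** B)"
  by (simp add: matrix_scalar_ac scalar_matrix_assoc)

lemma trace_scaleR: "trace (r *\<^sub>R (M::complex^'n^'n)) = of_real r * trace M"
  unfolding trace_def by (simp add: sum_distrib_left) (simp add: scaleR_conv_of_real)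

definition conj_transpose :: "complex^'n^'n \<Rightarrow> complex^'n^'n" where
  "conj_transpose A = (\<chi> i j. cnj (A$j$i))"

definition hermitian :: "complex^'n^'n \<Rightarrow> bool" where
  "hermitian A \<longleftrightarrow> conj_transpose A = A"

definition quad_form :: "complex^'n^'n \<Rightarrow> complex^'n \<Rightarrow> real" where
  "quad_form A x = Re (cinner x (A *v x))"

lemma cinner_conj_transpose: "cinner x (A *v y) = cinner (conj_transpose A *v x) y"
proof -
  have "cinner x (A *v y) = (\<Sum>i\<in>UNIV. \<Sum>j\<in>UNIV. cnj (x$i) * A$i$j * y$j)"
    by (simp add: cinner_def matrix_vector_mult_def sum_distrib_left mult.assoc)
  also have "\<dots> = (\<Sum>j\<in>UNIV. \<Sum>i\<in>UNIV. cnj (x$i) * A$i$j * y$j)"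
    by (rule sum.swap)
  also have "\<dots> = cinner (conj_transpose A *v x) y"
    by (simp add: cinner_def matrix_vector_mult_def conj_transpose_def sum_distrib_left
        sum_distrib_right mult_ac)
  finally show ?thesis .
qed

lemma conj_transpose_conj_transpose [simp]: "conj_transpose (conj_transpose A) = A"
  by (simp add: conj_transpose_def vec_eq_iff)

lemma conj_transpose_mult: "conj_transpose (A ** B) = conj_transpose B ** conj_transpose A"
  by (simp add: conj_transpose_def matrix_matrix_mult_def vec_eq_iff mult.commute)

lemma hermitian_add: "hermitian A \<Longrightarrow> hermitian B \<Longrightarrow> hermitian (A + B)"
  by (simp add: hermitian_def conj_transpose_def vec_eq_iff)

lemma hermitian_diff: "hermitian A \<Longrightarrow> hermitian B \<Longrightarrow> hermitian (A - B)"
  by (simp add: hermitian_def conj_transpose_def vec_eq_iff)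

lemma hermitian_scaleR: "hermitian A \<Longrightarrow> hermitian (r *\<^sub>R A)"
  by (simp add: hermitian_def conj_transpose_def vec_eq_iff)

lemma hermitian_zero: "hermitian 0"
  by (simp add: hermitian_def conj_transpose_def vec_eq_iff)

lemma hermitian_mat_1: "hermitian (mat 1)"
  by (simp add: hermitian_def conj_transpose_def mat_def vec_eq_iff)

lemma hermitian_ketbra_self: "hermitian (ketbra u u)"
  by (simp add: hermitian_def conj_transpose_def ketbra_def vec_eq_iff)

lemma hermitian_cinner: "hermitian A \<Longrightarrow> cinner x (A *v y) = cinner (A *v x) y"
  by (simp add: hermitian_def cinner_conj_transpose)

lemma hermitian_cinner_real: "hermitian A \<Longrightarrow> cinner x (A *v x) = of_real (quad_form A x)"
  using hermitian_cinner[of A x x] cinner_commute[of x "A *v x"]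
  by (simp add: quad_form_def complex_eq_iff)

lemma quad_form_zero [simp]: "quad_form 0 x = 0"
  by (simp add: quad_form_def)

lemma quad_form_add: "quad_form (A + B) x = quad_form A x + quad_form B x"
  by (simp add: quad_form_def matrix_vector_mult_add_rdistrib cinner_add_right)

lemma quad_form_diff: "quad_form (A - B) x = quad_form A x - quad_form B x"
  by (simp add: quad_form_def matrix_vector_mult_diff_rdistrib cinner_diff_right)

lemma quad_form_scaleR: "quad_form (r *\<^sub>R A) x = r * quad_form A x"
  by (simp add: quad_form_def matrix_vector_mult_scaleR_left cinner_scaleR_right)

lemma quad_form_scaleR_vector: "quad_form A (r *\<^sub>R x) = r\<^sup>2 * quad_form A x"
  by (simp add: quad_form_def matrix_vector_mult_scaleR_right cinner_scaleR_left
      cinner_scaleR_right power2_eq_square)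

lemma quad_form_smult_vector: "quad_form A (c *s x) = (cmod c)\<^sup>2 * quad_form A x"
proof -
  have "cinner (c *s x) (A *v (c *s x)) = (c * cnj c) * cinner x (A *v x)"
    by (simp add: vector_scalar_commute cinner_smult_left cinner_smult_right)
  then show ?thesis
    unfolding quad_form_def complex_norm_square[symmetric] by simp
qed

lemma quad_form_mat_1: "quad_form (mat 1) x = (norm x)\<^sup>2"
  by (simp add: quad_form_def cinner_self)

lemma quad_form_congruence:
  "quad_form (conj_transpose M ** A ** M) x = quad_form A (M *v x)"
  by (simp add: quad_form_def matrix_vector_mul_assoc[symmetric] cinner_conj_transpose)

lemma quad_form_add_vector:
  assumes "hermitian A"
  shows "quad_form A (u + v) = quad_form A u + quad_form A v + 2 * Re (cinner v (A *v u))"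
proof -
  have "cinner u (A *v v) = cnj (cinner v (A *v u))"
    using hermitian_cinner[OF assms, of u v] cinner_commute[of "A *v u" v] by simp
  then show ?thesis
    by (simp add: quad_form_def matrix_vector_right_distrib cinner_add_left cinner_add_right)
qed

lemma matrix_vector_mult_ketbra: "ketbra u v *v x = cinner v x *s u"
  by (simp add: ketbra_def matrix_vector_mult_def cinner_def vec_eq_iff sum_distrib_left mult_ac)

lemma matrix_mul_ketbra: "M ** ketbra u v ** N = ketbra (M *v u) (conj_transpose N *v v)"
  unfolding matrix_eq
  by (simp add: matrix_vector_mul_assoc[symmetric] matrix_vector_mult_ketbra
      vector_scalar_commute cinner_conj_transpose)

lemma quad_form_ketbra_self: "quad_form (ketbra u u) x = (cmod (cinner u x))\<^sup>2"
proof -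
  have "cinner x (ketbra u u *v x) = cinner u x * cnj (cinner u x)"
    by (simp add: matrix_vector_mult_ketbra cinner_smult_right cinner_commute[of x u])
  then show ?thesis
    unfolding quad_form_def complex_norm_square[symmetric] by simp
qed

lemma trace_ketbra_self: "trace (ketbra u u) = of_real ((norm u)\<^sup>2)"
  using cinner_self[of u] by (simp add: trace_def ketbra_def cinner_def mult.commute)

lemma quad_form_square_hermitian:
  assumes "hermitian S"
  shows "quad_form (S ** S) x = (norm (S *v x))\<^sup>2"
  using hermitian_cinner[OF assms, of x "S *v x"]
  by (simp add: quad_form_def matrix_vector_mul_assoc[symmetric] Re_cinner_self)


lemma norm_power2_perp_projection:
  assumes "norm e = 1"
  shows "(norm ((mat 1 - ketbra e e) *v v))\<^sup>2 = (norm v)\<^sup>2 - (cmod (cinner e v))\<^sup>2"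
proof -
  have "hermitian (mat 1 - ketbra e e)"
    by (intro hermitian_diff hermitian_mat_1 hermitian_ketbra_self)
  moreover have "(mat 1 - ketbra e e) ** (mat 1 - ketbra e e) = mat 1 - ketbra e e"
  proof -
    have "(mat 1 - ketbra e e) *v e = 0"
      using assms by (simp add: matrix_vector_mult_diff_rdistrib matrix_vector_mult_ketbra cinner_self)
    then have "(mat 1 - ketbra e e) ** ketbra e e ** mat 1 = 0"
      unfolding matrix_mul_ketbra by (simp add: ketbra_def vec_eq_iff)
    then show ?thesis
      by (simp add: matrix_diff_ldistrib)
  qed
  ultimately show ?thesis
    by (metis quad_form_square_hermitian quad_form_diff quad_form_mat_1 quad_form_ketbra_self)
qed


section \<open>Positive matrices\<close>

lemma pos_op_hermitian:
  assumes "pos_op A"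
  shows "hermitian A"
proof -
  have im: "Im (cinner x (A *v x)) = 0" for x
    using assms by (simp add: pos_op_def)
  have expand: "cinner (u + v) (A *v (u + v)) = cinner u (A *v u) + cinner v (A *v v)
      + cinner u (A *v v) + cinner v (A *v u)" for u v
    by (simp add: matrix_vector_right_distrib cinner_add_left cinner_add_right)
  have swap: "cinner v (A *v u) = cnj (cinner u (A *v v))" for u v
  proof -
    have "Im (cinner u (A *v v)) + Im (cinner v (A *v u)) = 0"
      using im[of "u + v"] im[of u] im[of v] by (simp add: expand)
    moreover have "Im (\<i> * cinner u (A *v v) - \<i> * cinner v (A *v u)) = 0"
      using im[of "u + \<i> *s v"] im[of u] im[of v]
      by (simp add: expand vector_scalar_commute cinner_smult_left cinner_smult_right)
    ultimately show ?thesis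
      by (simp add: complex_eq_iff)
  qed
  have "conj_transpose A $ i $ j = A $ i $ j" for i j
    using swap[of "axis j 1" "axis i 1"] by (simp add: conj_transpose_def cinner_axis_matrix)
  then show ?thesis
    by (simp add: hermitian_def vec_eq_iff)
qed

lemma pos_op_iff: "pos_op A \<longleftrightarrow> hermitian A \<and> (\<forall>x. 0 \<le> quad_form A x)"
  using pos_op_hermitian hermitian_cinner_real unfolding pos_op_def quad_form_def
  by (metis Im_complex_of_real Re_complex_of_real)

lemma quad_form_nonneg: "pos_op A \<Longrightarrow> 0 \<le> quad_form A x"
  by (simp add: pos_op_iff)

lemma pos_op_add: "pos_op A \<Longrightarrow> pos_op B \<Longrightarrow> pos_op (A + B)"
  by (simp add: pos_op_iff hermitian_add quad_form_add)

lemma pos_op_scaleR: "pos_op A \<Longrightarrow> 0 \<le> r \<Longrightarrow> pos_op (r *\<^sub>R A)"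
  by (simp add: pos_op_iff hermitian_scaleR quad_form_scaleR)

lemma pos_op_zero: "pos_op 0"
  by (simp add: pos_op_iff hermitian_zero)

lemma pos_op_mat_1: "pos_op (mat 1)"
  by (simp add: pos_op_iff hermitian_mat_1 quad_form_mat_1)

lemma pos_op_ketbra_self: "pos_op (ketbra u u)"
  by (simp add: pos_op_iff hermitian_ketbra_self quad_form_ketbra_self)

lemma pos_op_congruence:
  assumes "pos_op A"
  shows "pos_op (conj_transpose M ** A ** M)"
proof -
  have "hermitian (conj_transpose M ** A ** M)"
    using pos_op_hermitian[OF assms]
    by (simp add: hermitian_def conj_transpose_mult matrix_mul_assoc)
  then show ?thesis
    using assms by (simp add: pos_op_iff quad_form_congruence)
qed

lemma quadratic_nonneg_imp_discriminant:
  fixes a b c :: real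
  assumes "0 \<le> c" and nonneg: "\<And>t. 0 \<le> a + 2 * b * t + c * t\<^sup>2"
  shows "b\<^sup>2 \<le> a * c"
proof (cases "c = 0")
  case True
  have "b = 0"
  proof (rule ccontr)
    assume "b \<noteq> 0"
    then show False
      using nonneg[of "- (a + 1) / (2 * b)"] True by (simp add: field_simps)
  qed
  then show ?thesis
    using True by simp
next
  case False
  then have "0 < c"
    using assms(1) by simp
  have "0 \<le> a + 2 * b * (- b / c) + c * (- b / c)\<^sup>2"
    by (rule nonneg)
  also have "\<dots> = a - b\<^sup>2 / c"
    using \<open>0 < c\<close> by (simp add: field_simps power2_eq_square)
  finally show ?thesis
    using \<open>0 < c\<close> by (simp add: field_simps mult.commute)
qed

lemma pos_op_cauchy_schwarz:
  assumes A: "pos_op A"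
  shows "(cmod (cinner y (A *v x)))\<^sup>2 \<le> quad_form A y * quad_form A x"
proof (cases "cinner y (A *v x) = 0")
  case True
  then show ?thesis
    using quad_form_nonneg[OF A] by simp
next
  case False
  define z where "z = cinner y (A *v x)"
  have "0 < cmod z"
    using False z_def by simp
  \<comment> \<open>rotate y so that the cross term becomes the real number |z|\<close>
  define w where "w = (z / of_real (cmod z)) *s y"
  have wz: "cinner w (A *v x) = of_real (cmod z)"
  proof -
    have "cinner w (A *v x) = cnj z * z / of_real (cmod z)"
      by (simp add: w_def cinner_smult_left z_def)
    then show ?thesis
      using \<open>0 < cmod z\<close>
      by (simp add: mult.commute[of "cnj z"] complex_norm_square[symmetric] power2_eq_square)
  qed
  have qw: "quad_form A w = quad_form A y"
    using \<open>0 < cmod z\<close> by (simp add: w_def quad_form_smult_vector norm_divide)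
  have "0 \<le> quad_form A x + 2 * cmod z * t + quad_form A y * t\<^sup>2" for t
  proof -
    have "0 \<le> quad_form A (x + t *\<^sub>R w)"
      by (rule quad_form_nonneg[OF A])
    also have "\<dots> = quad_form A x + 2 * cmod z * t + quad_form A y * t\<^sup>2"
      by (simp add: quad_form_add_vector[OF pos_op_hermitian[OF A]] quad_form_scaleR_vector qw
          cinner_scaleR_left wz)
    finally show ?thesis .
  qed
  from quadratic_nonneg_imp_discriminant[OF quad_form_nonneg[OF A] this] show ?thesis
    by (simp add: z_def mult.commute)
qed

lemma pos_op_kernel_if_quad_form_zero:
  assumes A: "pos_op A" and "quad_form A x = 0"
  shows "A *v x = 0"
proof -
  have "(cmod (cinner (A *v x) (A *v x)))\<^sup>2 \<le> quad_form A (A *v x) * quad_form A x"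
    by (rule pos_op_cauchy_schwarz[OF A])
  then have "cinner (A *v x) (A *v x) = 0"
    using assms(2) by simp
  then show ?thesis
    by (simp add: cinner_self)
qed

lemma cinner_cauchy_schwarz: "cmod (cinner x y) \<le> norm x * norm y"
proof -
  have "(cmod (cinner x y))\<^sup>2 \<le> (norm x * norm y)\<^sup>2"
    using pos_op_cauchy_schwarz[OF pos_op_mat_1, of x y]
    by (simp add: quad_form_mat_1 power_mult_distrib)
  then show ?thesis
    by (rule power2_le_imp_le) simp
qed

lemma quad_form_le_norm: "quad_form A x \<le> norm x * norm (A *v x)"
  unfolding quad_form_def
  using cinner_cauchy_schwarz[of x "A *v x"] complex_Re_le_cmod order_trans by blast

lemma pos_op_id_minus_ketbra:
  assumes "norm e = 1" and "0 \<le> \<tau>" "\<tau> \<le> 1"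
  shows "pos_op (mat 1 - \<tau> *\<^sub>R ketbra e e)"
proof -
  have "\<tau> * (cmod (cinner e v))\<^sup>2 \<le> (norm v)\<^sup>2" for v
  proof -
    have "(cmod (cinner e v))\<^sup>2 \<le> (norm v)\<^sup>2"
      using cinner_cauchy_schwarz[of e v] assms(1) by (simp add: power_mono)
    then show ?thesis
      using assms(2,3) by (meson mult_left_le_one_le order_trans zero_le_power2)
  qed
  then show ?thesis
    by (simp add: pos_op_iff hermitian_diff hermitian_mat_1 hermitian_scaleR hermitian_ketbra_self
        quad_form_diff quad_form_mat_1 quad_form_scaleR quad_form_ketbra_self)
qed

lemma tendsto_matrix_mult:
  fixes X :: "'a \<Rightarrow> 'b::real_normed_algebra_1^'n^'m" and Y :: "'a \<Rightarrow> 'b^'p^'n"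
  assumes "(X \<longlongrightarrow> A) F" "(Y \<longlongrightarrow> B) F"
  shows "((\<lambda>k. X k ** Y k) \<longlongrightarrow> A ** B) F"
  unfolding matrix_matrix_mult_def by (intro tendsto_intros assms)

lemma tendsto_matrix_vector_mult:
  fixes X :: "'a \<Rightarrow> 'b::real_normed_algebra_1^'n^'m"
  assumes "(X \<longlongrightarrow> A) F" "(Y \<longlongrightarrow> y) F"
  shows "((\<lambda>k. X k *v Y k) \<longlongrightarrow> A *v y) F"
  unfolding matrix_vector_mult_def by (intro tendsto_intros assms)

lemma tendsto_cinner:
  fixes X Y :: "'a \<Rightarrow> complex^'n"
  assumes "(X \<longlongrightarrow> x) F" "(Y \<longlongrightarrow> y) F"
  shows "((\<lambda>k. cinner (X k) (Y k)) \<longlongrightarrow> cinner x y) F"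
  unfolding cinner_def by (intro tendsto_intros assms)

lemma tendsto_conj_transpose:
  fixes X :: "'a \<Rightarrow> complex^'n^'n"
  assumes "(X \<longlongrightarrow> A) F"
  shows "((\<lambda>k. conj_transpose (X k)) \<longlongrightarrow> conj_transpose A) F"
  unfolding conj_transpose_def by (intro tendsto_intros assms)

lemma tendsto_trace:
  fixes X :: "'a \<Rightarrow> 'b::real_normed_algebra_1^'n^'n"
  assumes "(X \<longlongrightarrow> A) F"
  shows "((\<lambda>k. trace (X k)) \<longlongrightarrow> trace A) F"
  unfolding trace_def by (intro tendsto_intros assms)

lemma tendsto_quad_form:
  fixes X :: "'a \<Rightarrow> complex^'n^'n"
  assumes "(X \<longlongrightarrow> A) F"
  shows "((\<lambda>k. quad_form (X k) x) \<longlongrightarrow> quad_form A x) F"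
  unfolding quad_form_def by (intro tendsto_intros tendsto_cinner tendsto_matrix_vector_mult assms)

lemma hermitian_limit:
  fixes X :: "nat \<Rightarrow> complex^'n^'n"
  assumes "X \<longlonglongrightarrow> A" "\<And>k. hermitian (X k)"
  shows "hermitian A"
proof -
  have "X \<longlonglongrightarrow> conj_transpose A"
    using tendsto_conj_transpose[OF assms(1)] assms(2) by (simp add: hermitian_def)
  then show ?thesis
    using assms(1) LIMSEQ_unique hermitian_def by metis
qed

lemma pos_op_limit:
  fixes X :: "nat \<Rightarrow> complex^'n^'n"
  assumes "X \<longlonglongrightarrow> A" "\<And>k. pos_op (X k)"
  shows "pos_op A"
proof -
  have "hermitian A"
    using hermitian_limit[OF assms(1)] assms(2) pos_op_hermitian by blast
  moreover have "0 \<le> quad_form A x" for x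
    using tendsto_quad_form[OF assms(1), of x] assms(2)
    by (intro LIMSEQ_le_const) (auto simp: quad_form_nonneg)
  ultimately show ?thesis
    by (simp add: pos_op_iff)
qed

lemma polarization_identity:
  fixes A :: "complex^'n^'n"
  shows "cinner x (A *v y) = (cinner (x + y) (A *v (x + y)) - cinner (x - y) (A *v (x - y))
     - \<i> * cinner (x + \<i> *s y) (A *v (x + \<i> *s y))
     + \<i> * cinner (x - \<i> *s y) (A *v (x - \<i> *s y))) / 4"
proof -
  have four: "4 * cinner x (A *v y) = cinner (x + y) (A *v (x + y)) - cinner (x - y) (A *v (x - y))
     - \<i> * cinner (x + \<i> *s y) (A *v (x + \<i> *s y))
     + \<i> * cinner (x - \<i> *s y) (A *v (x - \<i> *s y))"
    by (simp add: matrix_vector_right_distrib matrix_vector_mult_diff_distrib vector_scalar_commute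
        cinner_add_left cinner_add_right cinner_diff_left cinner_diff_right
        cinner_smult_left cinner_smult_right algebra_simps)
  show ?thesis
    unfolding four[symmetric] by simp
qed

lemma convergent_if_cinner_self_convergent:
  fixes M :: "nat \<Rightarrow> complex^'n^'n"
  assumes "\<And>x. convergent (\<lambda>k. cinner x (M k *v x))"
  shows "convergent M"
proof -
  define q where "q x = lim (\<lambda>k. cinner x (M k *v x))" for x
  have q: "(\<lambda>k. cinner x (M k *v x)) \<longlonglongrightarrow> q x" for x
    unfolding q_def using assms by (rule convergent_LIMSEQ_iff[THEN iffD1])
  define p where "p x y = (q (x + y) - q (x - y) - \<i> * q (x + \<i> *s y) + \<i> * q (x - \<i> *s y)) / 4"
    for x y
  have forms: "(\<lambda>k. cinner x (M k *v y)) \<longlonglongrightarrow> p x y" for x y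
    unfolding polarization_identity[of x _ y] p_def by (intro tendsto_intros q) simp
  have entry: "(\<lambda>k. M k $ i $ j) \<longlonglongrightarrow> p (axis i 1) (axis j 1)" for i j
    using forms[of "axis i 1" "axis j 1"] by (simp add: cinner_axis_matrix)
  have "M \<longlonglongrightarrow> (\<chi> i j. p (axis i 1) (axis j 1))"
    by (intro vec_tendstoI) (simp add: entry)
  then show ?thesis
    by (rule convergentI)
qed

lemma convergent_if_pos_op_decreasing:
  fixes M :: "nat \<Rightarrow> complex^'n^'n"
  assumes pos: "\<And>k. pos_op (M k)" and dec: "\<And>k. pos_op (M k - M (Suc k))"
  shows "convergent M"
proof (rule convergent_if_cinner_self_convergent)
  fix x
  have "decseq (\<lambda>k. quad_form (M k) x)"
    using quad_form_nonneg[OF dec] by (intro decseq_SucI) (simp add: quad_form_diff)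
  then obtain l where "(\<lambda>k. quad_form (M k) x) \<longlonglongrightarrow> l"
    using quad_form_nonneg[OF pos] by (metis decseq_convergent)
  then have "(\<lambda>k. complex_of_real (quad_form (M k) x)) \<longlonglongrightarrow> of_real l"
    by (rule tendsto_of_real)
  then show "convergent (\<lambda>k. cinner x (M k *v x))"
    using hermitian_cinner_real[OF pos_op_hermitian[OF pos]] by (auto intro: convergentI)
qed

lemma affine_recurrence_le:
  fixes r \<epsilon> :: "nat \<Rightarrow> real"
  assumes "\<tau> \<le> 1" "0 \<le> h" and rec: "\<And>k. r (Suc k) = (1 - \<tau>) * r k + \<epsilon> k"
    and small: "\<And>k. N \<le> k \<Longrightarrow> \<epsilon> k \<le> \<tau> * h"
  shows "r (N + m) \<le> (1 - \<tau>) ^ m * r N + h"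
proof (induction m)
  case 0
  then show ?case using \<open>0 \<le> h\<close> by simp
next
  case (Suc m)
  have "r (N + Suc m) \<le> (1 - \<tau>) * r (N + m) + \<tau> * h"
    using rec[of "N + m"] small[of "N + m"] by simp
  also have "\<dots> \<le> (1 - \<tau>) * ((1 - \<tau>) ^ m * r N + h) + \<tau> * h"
    using Suc \<open>\<tau> \<le> 1\<close> by (intro add_right_mono mult_left_mono) auto
  also have "\<dots> = (1 - \<tau>) ^ Suc m * r N + h"
    by (simp add: algebra_simps)
  finally show ?case .
qed

lemma affine_recurrence_tendsto_zero:
  fixes r \<epsilon> :: "nat \<Rightarrow> real"
  assumes "0 < \<tau>" "\<tau> \<le> 1" and nonneg: "\<And>k. 0 \<le> r k"
    and rec: "\<And>k. r (Suc k) = (1 - \<tau>) * r k + \<epsilon> k" and "\<epsilon> \<longlonglongrightarrow> 0"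
  shows "r \<longlonglongrightarrow> 0"
proof (rule LIMSEQ_I)
  fix d :: real
  assume "0 < d"
  define h where "h = d / 2"
  have "0 < h"
    using \<open>0 < d\<close> by (simp add: h_def)
  obtain N where N: "\<And>k. N \<le> k \<Longrightarrow> \<epsilon> k \<le> \<tau> * h"
    using LIMSEQ_D[OF \<open>\<epsilon> \<longlonglongrightarrow> 0\<close>, of "\<tau> * h"] \<open>0 < \<tau>\<close> \<open>0 < h\<close> by fastforce
  have "(\<lambda>m. (1 - \<tau>) ^ m * r N) \<longlonglongrightarrow> 0"
    using assms(1,2) by (intro tendsto_mult_left_zero LIMSEQ_power_zero) simp
  then obtain M where M: "\<And>m. M \<le> m \<Longrightarrow> (1 - \<tau>) ^ m * r N < h"
    using LIMSEQ_D[OF _ \<open>0 < h\<close>] by fastforce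
  have "\<bar>r n\<bar> < d" if "N + M \<le> n" for n
  proof -
    obtain m where "n = N + m" "M \<le> m"
      using \<open>N + M \<le> n\<close> le_Suc_ex by fastforce
    have "r (N + m) \<le> (1 - \<tau>) ^ m * r N + h"
      using \<open>\<tau> \<le> 1\<close> \<open>0 < h\<close> rec N by (intro affine_recurrence_le) auto
    then have "r n < h + h"
      using M[of m] \<open>n = N + m\<close> \<open>M \<le> m\<close> by simp
    then show ?thesis
      using nonneg[of n] by (simp add: h_def)
  qed
  then show "\<exists>n0. \<forall>n\<ge>n0. norm (r n - 0) < d"
    by auto
qed

section \<open>The positive square root\<close>

fun matpow :: "'a::semiring_1^'n^'n \<Rightarrow> nat \<Rightarrow> 'a^'n^'n" where
  "matpow B 0 = mat 1"
| "matpow B (Suc k) = B ** matpow B k"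

lemma matpow_add: "matpow B (j + k) = matpow B j ** matpow B k"
  by (induction j) (auto simp: matrix_mul_assoc)

lemma matpow_commute:
  assumes "X ** B = B ** X"
  shows "X ** matpow B k = matpow B k ** X"
proof (induction k)
  case 0
  then show ?case by simp
next
  case (Suc k)
  have "X ** (B ** matpow B k) = B ** (X ** matpow B k)"
    using assms by (simp add: matrix_mul_assoc)
  also have "\<dots> = (B ** matpow B k) ** X"
    using Suc by (simp add: matrix_mul_assoc)
  finally show ?case by simp
qed

lemma hermitian_matpow:
  assumes "hermitian B"
  shows "hermitian (matpow B k)"
proof (induction k)
  case 0
  then show ?case by (simp add: hermitian_mat_1)
next
  case (Suc k)
  have "conj_transpose (B ** matpow B k) = matpow B k ** B"
    using Suc assms by (simp add: hermitian_def conj_transpose_mult)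
  also have "\<dots> = B ** matpow B k"
    using matpow_commute[of B B k] by simp
  finally show ?case
    by (simp add: hermitian_def)
qed

lemma pos_op_matpow:
  assumes B: "pos_op B"
  shows "pos_op (matpow B k)"
proof -
  have herm: "conj_transpose (matpow B j) = matpow B j" for j
    using hermitian_matpow[OF pos_op_hermitian[OF B]] by (simp add: hermitian_def)
  obtain j where "k = j + j \<or> k = j + Suc j"
  proof
    show "k = k div 2 + k div 2 \<or> k = k div 2 + Suc (k div 2)"
      by presburger
  qed
  then show ?thesis
  proof
    assume "k = j + j"
    then have "matpow B k = conj_transpose (matpow B j) ** mat 1 ** matpow B j"
      by (simp add: matpow_add herm)
    then show ?thesis
      using pos_op_congruence[OF pos_op_mat_1] by simp
  next
    assume "k = j + Suc j"
    then have "matpow B k = matpow B j ** (B ** matpow B j)"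
      by (simp only: matpow_add matpow.simps)
    then have "matpow B k = conj_transpose (matpow B j) ** B ** matpow B j"
      by (simp add: herm matrix_mul_assoc)
    then show ?thesis
      using pos_op_congruence[OF B] by simp
  qed
qed

text \<open>Polynomials in \<open>B\<close> with nonnegative coefficients: they are positive when \<open>B\<close> is,
  commute with everything that commutes with \<open>B\<close>, and are closed under products.\<close>

inductive_set nonneg_polys :: "complex^'n^'n \<Rightarrow> (complex^'n^'n) set" for B where
  zero: "0 \<in> nonneg_polys B"
| add_monom: "X \<in> nonneg_polys B \<Longrightarrow> 0 \<le> r \<Longrightarrow> X + r *\<^sub>R matpow B k \<in> nonneg_polys B"

lemma nonneg_polys_add:
  assumes "X \<in> nonneg_polys B" "Y \<in> nonneg_polys B"
  shows "X + Y \<in> nonneg_polys B"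
  using assms(2)
proof induction
  case zero
  then show ?case using assms(1) by simp
next
  case (add_monom Y r k)
  then show ?case
    using nonneg_polys.add_monom[of "X + Y" B r k] by (simp add: add.assoc)
qed

lemma nonneg_polys_scaleR:
  assumes "X \<in> nonneg_polys B" "0 \<le> c"
  shows "c *\<^sub>R X \<in> nonneg_polys B"
  using assms(1)
proof induction
  case zero
  then show ?case by (simp add: nonneg_polys.zero)
next
  case (add_monom X r k)
  then show ?case
    using nonneg_polys.add_monom[of "c *\<^sub>R X" B "c * r" k] assms(2) by (simp add: scaleR_add_right)
qed

lemma self_in_nonneg_polys: "B \<in> nonneg_polys B"
  using nonneg_polys.add_monom[OF nonneg_polys.zero, of 1 B 1] by simp

lemma nonneg_polys_mult_matpow:
  assumes "X \<in> nonneg_polys B"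
  shows "X ** matpow B k \<in> nonneg_polys B"
  using assms
proof induction
  case zero
  then show ?case by (simp add: nonneg_polys.zero)
next
  case (add_monom X r j)
  have "(X + r *\<^sub>R matpow B j) ** matpow B k = X ** matpow B k + r *\<^sub>R matpow B (j + k)"
    by (simp add: matrix_add_rdistrib matrix_mul_scaleR_left matpow_add)
  then show ?case
    using add_monom nonneg_polys.add_monom by simp
qed

lemma nonneg_polys_mult:
  assumes "X \<in> nonneg_polys B" "Y \<in> nonneg_polys B"
  shows "X ** Y \<in> nonneg_polys B"
  using assms(2)
proof induction
  case zero
  then show ?case by (simp add: nonneg_polys.zero)
next
  case (add_monom Y r k)
  have "X ** (Y + r *\<^sub>R matpow B k) = X ** Y + r *\<^sub>R (X ** matpow B k)"
    by (simp add: matrix_add_ldistrib matrix_mul_scaleR_right)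
  then show ?case
    using add_monom
    by (auto intro!: nonneg_polys_add nonneg_polys_scaleR nonneg_polys_mult_matpow[OF assms(1)])
qed

lemma nonneg_polys_commute:
  assumes "X \<in> nonneg_polys B" "Z ** B = B ** Z"
  shows "X ** Z = Z ** X"
  using assms(1)
proof induction
  case zero
  then show ?case by simp
next
  case (add_monom X r k)
  then show ?case
    using matpow_commute[OF assms(2), of k]
    by (simp add: matrix_add_rdistrib matrix_add_ldistrib matrix_mul_scaleR_left matrix_mul_scaleR_right)
qed

lemma pos_op_nonneg_polys:
  assumes "pos_op B" "X \<in> nonneg_polys B"
  shows "pos_op X"
  using assms(2)
proof induction
  case zero
  then show ?case by (rule pos_op_zero)
next
  case (add_monom X r k)
  then show ?case
    using pos_op_add pos_op_scaleR pos_op_matpow[OF assms(1)] by blast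
qed

text \<open>For \<open>0 \<le> B \<le> 1\<close> these iterates increase to \<open>C = 1 - (1 - B)^(1/2)\<close>,
  the fixed point of \<open>C = (B + C^2) / 2\<close>.\<close>

fun sqrt_iter :: "complex^'n^'n \<Rightarrow> nat \<Rightarrow> complex^'n^'n" where
  "sqrt_iter B 0 = 0"
| "sqrt_iter B (Suc n) = (1/2) *\<^sub>R (B + sqrt_iter B n ** sqrt_iter B n)"

lemma sqrt_iter_in_nonneg_polys: "sqrt_iter B n \<in> nonneg_polys B"
proof (induction n)
  case 0
  then show ?case by (simp add: nonneg_polys.zero)
next
  case (Suc n)
  then show ?case
    by (simp add: nonneg_polys_scaleR nonneg_polys_add self_in_nonneg_polys nonneg_polys_mult)
qed

lemma sqrt_iter_commute: "sqrt_iter B m ** sqrt_iter B n = sqrt_iter B n ** sqrt_iter B m"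
proof -
  have "sqrt_iter B k ** B = B ** sqrt_iter B k" for k
    using nonneg_polys_commute[OF sqrt_iter_in_nonneg_polys[of B k], of B] by simp
  then show ?thesis
    using nonneg_polys_commute[OF sqrt_iter_in_nonneg_polys[of B m], of "sqrt_iter B n"] by simp
qed

lemma sqrt_iter_increment_in_nonneg_polys:
  "sqrt_iter B (Suc n) - sqrt_iter B n \<in> nonneg_polys B"
proof (induction n)
  case 0
  then show ?case by (auto intro: nonneg_polys_scaleR self_in_nonneg_polys)
next
  case (Suc n)
  define X where "X = sqrt_iter B (Suc n)"
  define Y where "Y = sqrt_iter B n"
  have "X ** Y = Y ** X"
    unfolding X_def Y_def by (rule sqrt_iter_commute)
  have step: "sqrt_iter B (Suc (Suc n)) = (1/2) *\<^sub>R (B + X ** X)" "X = (1/2) *\<^sub>R (B + Y ** Y)"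
    unfolding X_def Y_def by (rule sqrt_iter.simps(2))+
  have "sqrt_iter B (Suc (Suc n)) - X = (1/2) *\<^sub>R (B + X ** X) - (1/2) *\<^sub>R (B + Y ** Y)"
    by (simp only: step)
  also have "\<dots> = (1/2) *\<^sub>R (X ** X - Y ** Y)"
    by (simp add: algebra_simps)
  also have "X ** X - Y ** Y = (X - Y) ** (X + Y)"
    using \<open>X ** Y = Y ** X\<close> by (simp add: matrix_diff_rdistrib matrix_add_ldistrib)
  finally have "sqrt_iter B (Suc (Suc n)) - X = (1/2) *\<^sub>R ((X - Y) ** (X + Y))" .
  moreover have "(X - Y) ** (X + Y) \<in> nonneg_polys B"
    unfolding X_def Y_def using Suc.IH
    by (blast intro: nonneg_polys_mult nonneg_polys_add sqrt_iter_in_nonneg_polys)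
  ultimately show ?case
    by (simp add: X_def nonneg_polys_scaleR)
qed

lemma sqrt_iter_norm_le:
  assumes "\<And>x. norm (B *v x) \<le> norm x"
  shows "norm (sqrt_iter B n *v x) \<le> norm x"
proof (induction n arbitrary: x)
  case 0
  then show ?case by simp
next
  case (Suc n)
  let ?C = "sqrt_iter B n"
  have "norm (sqrt_iter B (Suc n) *v x) = (1/2) * norm (B *v x + ?C *v (?C *v x))"
    by (simp add: matrix_vector_mult_scaleR_left matrix_vector_mult_add_rdistrib
        matrix_vector_mul_assoc)
  also have "\<dots> \<le> (1/2) * (norm (B *v x) + norm (?C *v (?C *v x)))"
    by (simp add: norm_triangle_ineq)
  also have "\<dots> \<le> norm x"
    using assms[of x] Suc[of "?C *v x"] Suc[of x] by simp
  finally show ?case .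
qed

lemma pos_op_id_minus_sqrt_iter:
  assumes B: "pos_op B" and contr: "\<And>x. norm (B *v x) \<le> norm x"
  shows "pos_op (mat 1 - sqrt_iter B n)"
proof -
  have "quad_form (sqrt_iter B n) x \<le> (norm x)\<^sup>2" for x
  proof -
    have "quad_form (sqrt_iter B n) x \<le> norm x * norm (sqrt_iter B n *v x)"
      by (rule quad_form_le_norm)
    also have "\<dots> \<le> norm x * norm x"
      by (intro mult_left_mono sqrt_iter_norm_le contr) simp
    finally show ?thesis
      by (simp add: power2_eq_square)
  qed
  then show ?thesis
    using pos_op_hermitian[OF pos_op_nonneg_polys[OF B sqrt_iter_in_nonneg_polys]]
    by (simp add: pos_op_iff hermitian_diff hermitian_mat_1 quad_form_diff quad_form_mat_1)
qed

lemma sqrt_iter_convergent: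
  assumes B: "pos_op B" and contr: "\<And>x. norm (B *v x) \<le> norm x"
  shows "convergent (sqrt_iter B)"
proof -
  have "pos_op ((mat 1 - sqrt_iter B n) - (mat 1 - sqrt_iter B (Suc n)))" for n
    using pos_op_nonneg_polys[OF B sqrt_iter_increment_in_nonneg_polys]
    by (simp del: sqrt_iter.simps)
  with pos_op_id_minus_sqrt_iter[OF B contr] have "convergent (\<lambda>n. mat 1 - sqrt_iter B n)"
    by (rule convergent_if_pos_op_decreasing)
  then obtain L where "(\<lambda>n. mat 1 - sqrt_iter B n) \<longlonglongrightarrow> L"
    by (auto simp: convergent_def)
  then have "(\<lambda>n. mat 1 - (mat 1 - sqrt_iter B n)) \<longlonglongrightarrow> mat 1 - L"
    by (intro tendsto_diff tendsto_const)
  then show ?thesis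
    by (auto simp: convergent_def)
qed

lemma sqrt_id_minus_exists:
  assumes B: "pos_op B" and contr: "\<And>x. norm (B *v x) \<le> norm x"
  shows "\<exists>S. pos_op S \<and> S ** S = mat 1 - B \<and> (\<forall>Z. Z ** B = B ** Z \<longrightarrow> Z ** S = S ** Z)"
proof -
  let ?C = "sqrt_iter B"
  obtain C where lim: "?C \<longlonglongrightarrow> C"
    using sqrt_iter_convergent[OF B contr] by (auto simp: convergent_def)
  have "(\<lambda>n. ?C (Suc n)) \<longlonglongrightarrow> (1/2) *\<^sub>R (B + C ** C)"
    unfolding sqrt_iter.simps by (intro tendsto_intros tendsto_matrix_mult lim)
  then have fixed_point: "C = (1/2) *\<^sub>R (B + C ** C)"
    using LIMSEQ_Suc[OF lim] LIMSEQ_unique by blast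
  have "2 *\<^sub>R C = B + C ** C"
    by (subst fixed_point) simp
  then have CC: "C ** C = C + C - B"
    by (simp add: scaleR_2 algebra_simps)
  define S where "S = mat 1 - C"
  have "pos_op S"
    unfolding S_def
    by (rule pos_op_limit[OF tendsto_diff[OF tendsto_const lim] pos_op_id_minus_sqrt_iter[OF B contr]])
  moreover have "S ** S = (mat 1 - C) - (C - C ** C)"
    by (simp add: S_def matrix_diff_rdistrib matrix_diff_ldistrib)
  then have "S ** S = mat 1 - B"
    unfolding CC by (simp add: algebra_simps)
  moreover have "Z ** S = S ** Z" if "Z ** B = B ** Z" for Z
  proof -
    have "Z ** ?C n = ?C n ** Z" for n
      using nonneg_polys_commute[OF sqrt_iter_in_nonneg_polys that] by metis
    moreover have "(\<lambda>n. Z ** ?C n) \<longlonglongrightarrow> Z ** C" "(\<lambda>n. ?C n ** Z) \<longlonglongrightarrow> C ** Z"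
      by (intro tendsto_matrix_mult tendsto_const lim)+
    ultimately have "Z ** C = C ** Z"
      using LIMSEQ_unique by fastforce
    then show ?thesis
      by (simp add: S_def matrix_diff_rdistrib matrix_diff_ldistrib)
  qed
  ultimately show ?thesis
    by blast
qed

lemma norm_power2_le_quad_form:
  assumes A: "pos_op A" and K: "\<And>x. norm (A *v x) \<le> K * norm x"
  shows "(norm (A *v x))\<^sup>2 \<le> K * quad_form A x"
proof (cases "A *v x = 0")
  case True
  then show ?thesis
    using K[of x] quad_form_nonneg[OF A, of x] norm_ge_zero[of x]
    by (simp add: quad_form_def)
next
  case False
  define m where "m = (norm (A *v x))\<^sup>2"
  have "0 < m"
    using False by (simp add: m_def)
  have "quad_form A (A *v x) \<le> K * m"
  proof -
    have "quad_form A (A *v x) \<le> norm (A *v x) * norm (A *v (A *v x))"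
      by (rule quad_form_le_norm)
    also have "\<dots> \<le> norm (A *v x) * (K * norm (A *v x))"
      by (intro mult_left_mono K) simp
    finally show ?thesis
      by (simp add: m_def power2_eq_square mult_ac)
  qed
  have "m * m = (cmod (cinner (A *v x) (A *v x)))\<^sup>2"
    by (simp add: m_def cinner_self norm_mult power2_eq_square)
  also have "\<dots> \<le> quad_form A (A *v x) * quad_form A x"
    by (rule pos_op_cauchy_schwarz[OF A])
  also have "\<dots> \<le> K * m * quad_form A x"
    by (intro mult_right_mono quad_form_nonneg[OF A] \<open>quad_form A (A *v x) \<le> K * m\<close>)
  finally have "m \<le> K * quad_form A x"
    using \<open>0 < m\<close> by (simp add: mult.assoc)
  then show ?thesis
    by (simp add: m_def)
qed

lemma
  assumes A: "pos_op A" and "0 < K" and K: "\<And>x. norm (A *v x) \<le> K * norm x"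
  shows pos_op_id_minus_rescaled: "pos_op (mat 1 - (1/K) *\<^sub>R A)"
    and norm_id_minus_rescaled_le: "norm ((mat 1 - (1/K) *\<^sub>R A) *v x) \<le> norm x"
proof -
  have "quad_form A x \<le> K * (norm x)\<^sup>2" for x
    using quad_form_le_norm[of A x] mult_left_mono[OF K[of x] norm_ge_zero[of x]]
    by (simp add: power2_eq_square mult_ac)
  then show "pos_op (mat 1 - (1/K) *\<^sub>R A)"
    using \<open>0 < K\<close> pos_op_hermitian[OF A]
    by (simp add: pos_op_iff hermitian_diff hermitian_mat_1 hermitian_scaleR quad_form_diff
        quad_form_mat_1 quad_form_scaleR field_simps)
  have "Re (cinner (A *v x) x) = quad_form A x"
    using hermitian_cinner[OF pos_op_hermitian[OF A], of x x] by (simp add: quad_form_def)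
  then have "(norm ((mat 1 - (1/K) *\<^sub>R A) *v x))\<^sup>2
      = (norm x)\<^sup>2 - 2 * (1/K) * quad_form A x + (1/K)\<^sup>2 * (norm (A *v x))\<^sup>2"
    unfolding matrix_vector_mult_diff_rdistrib matrix_vector_mult_scaleR_left matrix_vector_mul_lid
      Re_cinner_self[symmetric]
    by (simp add: cinner_diff_left cinner_diff_right cinner_scaleR_left cinner_scaleR_right
        Re_cinner_self power2_eq_square) (use \<open>0 < K\<close> in \<open>simp add: quad_form_def field_simps\<close>)
  also have "\<dots> \<le> (norm x)\<^sup>2 - 2 * (1/K) * quad_form A x + (1/K)\<^sup>2 * (K * quad_form A x)"
    by (intro add_left_mono mult_left_mono norm_power2_le_quad_form[OF A K]) simp
  also have "\<dots> = (norm x)\<^sup>2 - (1/K) * quad_form A x"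
    using \<open>0 < K\<close> by (simp add: power2_eq_square field_simps)
  also have "\<dots> \<le> (norm x)\<^sup>2"
    using quad_form_nonneg[OF A, of x] \<open>0 < K\<close> by simp
  finally show "norm ((mat 1 - (1/K) *\<^sub>R A) *v x) \<le> norm x"
    by (rule power2_le_imp_le) simp
qed

lemma pos_op_sqrt_exists:
  assumes A: "pos_op A"
  shows "\<exists>S. pos_op S \<and> S ** S = A \<and> (\<forall>Z. Z ** A = A ** Z \<longrightarrow> Z ** S = S ** Z)"
proof -
  have "bounded_linear (\<lambda>x. A *v x)"
    by (simp add: linear_conv_bounded_linear)
  then obtain K where "0 < K" and K: "\<And>x. norm (A *v x) \<le> K * norm x"
    using bounded_linear.pos_bounded by (auto simp: mult.commute)
  define B where "B = mat 1 - (1/K) *\<^sub>R A"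
  obtain R where R: "pos_op R" "R ** R = mat 1 - B"
    and R_commute: "\<And>Z. Z ** B = B ** Z \<Longrightarrow> Z ** R = R ** Z"
    using sqrt_id_minus_exists[of B] unfolding B_def
    using pos_op_id_minus_rescaled[OF A \<open>0 < K\<close> K] norm_id_minus_rescaled_le[OF A \<open>0 < K\<close> K]
    by blast
  define S where "S = sqrt K *\<^sub>R R"
  have "pos_op S"
    unfolding S_def using \<open>0 < K\<close> by (simp add: pos_op_scaleR R(1))
  moreover have "S ** S = A"
    using \<open>0 < K\<close> by (simp add: S_def matrix_mul_scaleR_left matrix_mul_scaleR_right R(2) B_def)
  moreover have "Z ** S = S ** Z" if "Z ** A = A ** Z" for Z
  proof -
    have "Z ** B = B ** Z"
      using that by (simp add: B_def matrix_diff_rdistrib matrix_diff_ldistrib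
          matrix_mul_scaleR_left matrix_mul_scaleR_right)
    then show ?thesis
      by (simp add: S_def R_commute matrix_mul_scaleR_left matrix_mul_scaleR_right)
  qed
  ultimately show ?thesis
    by blast
qed

lemma pos_op_sqrt_unique:
  assumes S: "pos_op S" "S ** S = A" and S_commute: "\<And>Z. Z ** A = A ** Z \<Longrightarrow> Z ** S = S ** Z"
    and R: "pos_op R" "R ** R = A"
  shows "R = S"
proof -
  have "R ** A = A ** R"
    by (simp add: R(2)[symmetric] matrix_mul_assoc)
  then have RS: "R ** S = S ** R"
    by (rule S_commute)
  define X where "X = S - R"
  have X_herm: "hermitian X"
    unfolding X_def using S(1) R(1) by (intro hermitian_diff pos_op_hermitian)
  \<comment> \<open>(S - R)(S + R) = S^2 - R^2 = 0 since S and R commute\<close>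
  have "X ** (S + R) = 0"
    by (simp add: X_def matrix_diff_rdistrib matrix_add_ldistrib S(2) R(2) RS)
  then have "X ** S ** X + X ** R ** X = 0"
    by (metis matrix_add_ldistrib matrix_add_rdistrib matrix_mul_assoc times0_left)
  then have "quad_form S (X *v v) + quad_form R (X *v v) = 0" for v
    using quad_form_congruence[of X S v] quad_form_congruence[of X R v] X_herm
      quad_form_add[of "X ** S ** X" "X ** R ** X" v]
    by (simp add: hermitian_def)
  then have "quad_form S (X *v v) = 0" "quad_form R (X *v v) = 0" for v
    using quad_form_nonneg[OF S(1)] quad_form_nonneg[OF R(1)] by (smt (verit))+
  then have "X *v (X *v v) = 0" for v
    using pos_op_kernel_if_quad_form_zero[OF S(1)] pos_op_kernel_if_quad_form_zero[OF R(1)]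
    by (simp add: X_def matrix_vector_mult_diff_rdistrib)
  then have "cinner (X *v v) (X *v v) = 0" for v
    using hermitian_cinner[OF X_herm] by simp
  then have "X = 0"
    by (simp add: cinner_self matrix_eq)
  then show ?thesis
    by (simp add: X_def)
qed

lemma
  assumes "pos_op A"
  shows pos_op_op_sqrt: "pos_op (op_sqrt A)"
    and op_sqrt_square: "op_sqrt A ** op_sqrt A = A"
proof -
  obtain S where "pos_op S" "S ** S = A" "\<And>Z. Z ** A = A ** Z \<Longrightarrow> Z ** S = S ** Z"
    using pos_op_sqrt_exists[OF assms] by blast
  then have "\<exists>!S. pos_op S \<and> S ** S = A"
    using pos_op_sqrt_unique by blast
  then have "pos_op (op_sqrt A) \<and> op_sqrt A ** op_sqrt A = A"
    unfolding op_sqrt_def by (rule theI')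
  then show "pos_op (op_sqrt A)" "op_sqrt A ** op_sqrt A = A"
    by auto
qed

section \<open>The damped square-root iteration\<close>

locale damped_sqrt_iteration =
  fixes e :: "complex^'n" and \<tau> :: real and T :: "nat \<Rightarrow> complex^'n^'n"
  assumes e_unit: "norm e = 1" and tau_pos: "0 < \<tau>" and tau_less_1: "\<tau> < 1"
    and pos_op_T_0: "pos_op (T 0)"
    and T_Suc: "\<And>k. T (Suc k) = op_sqrt (T k) ** (mat 1 - \<tau> *\<^sub>R ketbra e e) ** op_sqrt (T k)"
begin

abbreviation S :: "nat \<Rightarrow> complex^'n^'n" where
  "S k \<equiv> op_sqrt (T k)"

abbreviation P :: "complex^'n^'n" where
  "P \<equiv> mat 1 - ketbra e e"

lemma hermitian_P: "hermitian P"
  by (intro hermitian_diff hermitian_mat_1 hermitian_ketbra_self)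

lemma pos_op_T: "pos_op (T k)"
proof (induction k)
  case 0
  show ?case by (rule pos_op_T_0)
next
  case (Suc k)
  have "conj_transpose (S k) = S k"
    using pos_op_hermitian[OF pos_op_op_sqrt[OF Suc]] by (simp add: hermitian_def)
  then show ?case
    using pos_op_congruence[OF pos_op_id_minus_ketbra[OF e_unit], of \<tau> "S k"] tau_pos tau_less_1
    by (simp add: T_Suc)
qed

lemma hermitian_S: "hermitian (S k)"
  by (rule pos_op_hermitian[OF pos_op_op_sqrt[OF pos_op_T]])

lemma T_Suc_eq: "T (Suc k) = T k - \<tau> *\<^sub>R ketbra (S k *v e) (S k *v e)"
proof -
  have "T (Suc k) = S k ** S k - \<tau> *\<^sub>R (S k ** ketbra e e ** S k)"
    by (simp add: T_Suc matrix_diff_ldistrib matrix_diff_rdistrib matrix_mul_scaleR_left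
        matrix_mul_scaleR_right matrix_mul_assoc)
  then show ?thesis
    using hermitian_S[of k] by (simp add: op_sqrt_square[OF pos_op_T] matrix_mul_ketbra hermitian_def)
qed

lemma T_convergent: "T \<longlonglongrightarrow> lim T"
proof -
  have "pos_op (T k - T (Suc k))" for k
    using tau_pos by (simp add: T_Suc_eq pos_op_scaleR pos_op_ketbra_self)
  then have "convergent T"
    by (rule convergent_if_pos_op_decreasing[OF pos_op_T])
  then show ?thesis
    by (simp add: convergent_LIMSEQ_iff)
qed

lemma quad_form_T_Suc:
  "quad_form (T (Suc k)) e = (1 - \<tau>) * quad_form (T k) e + \<tau> * (norm (P *v (S k *v e)))\<^sup>2"
proof -
  have T_e: "quad_form (T k) e = (norm (S k *v e))\<^sup>2"
    using quad_form_square_hermitian[OF hermitian_S] by (simp add: op_sqrt_square[OF pos_op_T])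
  have "cmod (cinner (S k *v e) e) = cmod (cinner e (S k *v e))"
    by (subst cinner_commute) simp
  then have "quad_form (T (Suc k)) e = quad_form (T k) e - \<tau> * (cmod (cinner e (S k *v e)))\<^sup>2"
    by (simp add: T_Suc_eq quad_form_diff quad_form_scaleR quad_form_ketbra_self)
  then show ?thesis
    unfolding norm_power2_perp_projection[OF e_unit] T_e[symmetric] by (simp add: algebra_simps)
qed

lemma P_T_P_diff:
  "P ** T k ** P - P ** T (Suc k) ** P = \<tau> *\<^sub>R ketbra (P *v (S k *v e)) (P *v (S k *v e))"
proof -
  have "P ** T k ** P - P ** T (Suc k) ** P = P ** (T k - T (Suc k)) ** P"
    by (simp add: matrix_diff_ldistrib matrix_diff_rdistrib)
  then show ?thesis
    using hermitian_P
    by (simp add: T_Suc_eq matrix_mul_scaleR_left matrix_mul_scaleR_right matrix_mul_ketbra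
        hermitian_def)
qed

lemma sums_norm_P_S_e:
  "(\<lambda>k. of_real (\<tau> * (norm (P *v (S k *v e)))\<^sup>2)) sums trace (P ** T 0 ** P - P ** lim T ** P)"
proof -
  have "(\<lambda>k. trace (P ** T k ** P)) \<longlonglongrightarrow> trace (P ** lim T ** P)"
    by (intro tendsto_trace tendsto_matrix_mult tendsto_const T_convergent)
  from telescope_sums'[OF this] show ?thesis
    by (simp add: trace_sub[symmetric] P_T_P_diff trace_scaleR trace_ketbra_self)
qed

lemma P_S_e_tendsto_zero: "(\<lambda>k. P *v (S k *v e)) \<longlonglongrightarrow> 0"
proof -
  have "(\<lambda>k. Re (of_real (\<tau> * (norm (P *v (S k *v e)))\<^sup>2))) \<longlonglongrightarrow> Re 0"
    by (intro tendsto_Re summable_LIMSEQ_zero sums_summable[OF sums_norm_P_S_e])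
  then have "(\<lambda>k. (1 / \<tau>) * (\<tau> * (norm (P *v (S k *v e)))\<^sup>2)) \<longlonglongrightarrow> (1 / \<tau>) * 0"
    by (intro tendsto_mult_left) simp
  then have "(\<lambda>k. sqrt ((norm (P *v (S k *v e)))\<^sup>2)) \<longlonglongrightarrow> sqrt 0"
    using tau_pos by (intro tendsto_real_sqrt) simp
  then show ?thesis
    by (simp add: tendsto_norm_zero_iff)
qed

lemma quad_form_T_e_tendsto_zero: "(\<lambda>k. quad_form (T k) e) \<longlonglongrightarrow> 0"
proof (rule affine_recurrence_tendsto_zero)
  have "(\<lambda>k. (norm (P *v (S k *v e)))\<^sup>2) \<longlonglongrightarrow> 0"
    using tendsto_power[OF tendsto_norm[OF P_S_e_tendsto_zero], of 2] by simp
  then show "(\<lambda>k. \<tau> * (norm (P *v (S k *v e)))\<^sup>2) \<longlonglongrightarrow> 0"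
    by (rule tendsto_mult_right_zero)
qed (use tau_pos tau_less_1 quad_form_nonneg[OF pos_op_T] quad_form_T_Suc in auto)

lemma lim_T_e: "lim T *v e = 0"
proof (rule pos_op_kernel_if_quad_form_zero)
  show "pos_op (lim T)"
    by (rule pos_op_limit[OF T_convergent pos_op_T])
  show "quad_form (lim T) e = 0"
    using tendsto_quad_form[OF T_convergent] quad_form_T_e_tendsto_zero LIMSEQ_unique by blast
qed

lemma cinner_e_lim_T: "cinner e (lim T *v x) = 0"
proof -
  have "hermitian (lim T)"
    by (rule hermitian_limit[OF T_convergent pos_op_hermitian[OF pos_op_T]])
  then show ?thesis
    by (simp add: hermitian_cinner lim_T_e)
qed

end

theorem proposition3p1:
  fixes e :: "complex^'n" and \<tau> :: real
    and T :: "nat \<Rightarrow> complex^'n^'n"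
    and Q :: "complex^'n^'n"
    and a :: "nat \<Rightarrow> complex" and b y :: "nat \<Rightarrow> complex^'n"
    and B :: "nat \<Rightarrow> complex^'n^'n"
    and Tinf Binf :: "complex^'n^'n"
  assumes e_unit: "norm e = 1"
    and tau: "0 < \<tau>" "\<tau> < 1"
    and T0: "pos_op (T 0)"
    and T_rec: "\<And>k. T (Suc k) = op_sqrt (T k) ** (mat 1 - \<tau> *\<^sub>R ketbra e e) ** op_sqrt (T k)"
    and Q_def: "Q = mat 1 - ketbra e e"
    and a_def: "\<And>k. a k = cinner e (T k *v e)"
    and b_def: "\<And>k. b k = Q *v (T k *v e)"
    and B_def: "\<And>k. B k = Q ** T k ** Q"
    and y_def: "\<And>k. y k = Q *v (op_sqrt (T k) *v e)"
    and Tinf_def: "Tinf = lim T"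
    and Binf_def: "Binf = Q ** Tinf ** Q"
  shows "T \<longlonglongrightarrow> Tinf
    \<and> (\<forall>k. a (Suc k) = of_real (1 - \<tau>) * a k + of_real (\<tau> * (norm (y k))\<^sup>2))
    \<and> (\<lambda>k. of_real (\<tau> * (norm (y k))\<^sup>2)) sums trace (B 0 - Binf)
    \<and> y \<longlonglongrightarrow> 0
    \<and> a \<longlonglongrightarrow> 0
    \<and> b \<longlonglongrightarrow> 0
    \<and> Tinf *v e = 0
    \<and> (\<forall>x. cinner e (Tinf *v x) = 0)"
proof -
  interpret damped_sqrt_iteration e \<tau> T
    using e_unit tau T0 T_rec by unfold_locales
  have T_lim: "T \<longlonglongrightarrow> Tinf"
    unfolding Tinf_def by (rule T_convergent)
  have a_eq: "a k = of_real (quad_form (T k) e)" for k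
    unfolding a_def by (rule hermitian_cinner_real[OF pos_op_hermitian[OF pos_op_T]])
  have y_eq: "y = (\<lambda>k. P *v (S k *v e))"
    using y_def Q_def by auto
  have "b = (\<lambda>k. Q *v (T k *v e))"
    using b_def by auto
  then have "b \<longlonglongrightarrow> Q *v (Tinf *v e)"
    by (simp add: tendsto_matrix_vector_mult T_lim)
  then have "b \<longlonglongrightarrow> 0"
    using lim_T_e by (simp add: Tinf_def)
  moreover have "a \<longlonglongrightarrow> 0"
    unfolding a_eq by (rule tendsto_of_real[OF quad_form_T_e_tendsto_zero, simplified])
  moreover have "a (Suc k) = of_real (1 - \<tau>) * a k + of_real (\<tau> * (norm (y k))\<^sup>2)" for k
    unfolding a_eq y_eq quad_form_T_Suc by simp
  ultimately show ?thesis
    using T_lim sums_norm_P_S_e P_S_e_tendsto_zero lim_T_e cinner_e_lim_T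
    by (simp add: y_eq B_def Binf_def Q_def Tinf_def)
qed

end
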